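(* Let $n=|V|\ge4$ and let $G$ be a relationship network on $V$ satisfying structural balance, known to the designer. Then there exists a valid mechanism that is efficient and DSIC if and only if either $G$ has exactly one F-component (i.e. all pairs of agents are friends) or $G$ has at least three EF-components.
   Context: A relationship network on $V=\{1,\dots,n\}$ assigns to every unordered pair of distinct agents exactly one of the symmetric relations friends, enemies, impartial; $F_i,E_i,I_i$ denote the friends, enemies, impartials of $i$. Structural balance: for all pairwise distinct $i,j,k$: $j\in F_i, k\in F_j\Rightarrow k\in F_i$; $j\in E_i,k\in E_j\Rightarrow k\in F_i$; $j\in E_i,k\in F_j\Rightarrow k\in E_i$. An EF-component is a connected component of the graph whose edges are friend or enemy pairs; an F-component is a connected component of the graph whose edges are friend pairs. Preferences: fix $w_f,w_e>0$; $p\succ_i p'$ iff $p_i>p'_i$, or $p_i=p'_i$ and $w_f\sum_{j\in F_i}(p_j-p'_j)-w_e\sum_{j\in E_i}(p_j-p'_j)>0$; $p\succsim_ip'$ means not $p'\succ_ip$. Known-network setting: each agent $i$ sends a message $m_i\subseteq V$ (the agents it reports as needy). A mechanism is $g:(2^V)^V\to[0,1]^V$ (it may depend on the known network); it is valid if $\sum_ig_i(\mathbf m)\le1$ for all $\mathbf m$; DSIC if for all $i$, all profiles $\mathbf m$ and all $m'_i\subseteq V$, $g(\mathbf m)\succsim_i g(m'_i,\mathbf m_{-i})$; efficient if for every nonempty $N\subseteq V$, at the truthful profile $m_j=N$ for all $j$, $\sum_{i\in N}g_i(\mathbf m)=1$. *)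

theory Defs
  imports Complex_Main
begin

datatype relation = Friends | Enemies | Impartial

text \<open>A relationship network on the (finite) agent type 'a: every unordered pair of
distinct agents gets exactly one symmetric relation. Values on the diagonal are irrelevant.\<close>
definition network :: "('a \<Rightarrow> 'a \<Rightarrow> relation) \<Rightarrow> bool" where
  "network G \<longleftrightarrow> (\<forall>i j. i \<noteq> j \<longrightarrow> G i j = G j i)"

definition friends :: "('a \<Rightarrow> 'a \<Rightarrow> relation) \<Rightarrow> 'a \<Rightarrow> 'a set" where
  "friends G i = {j. j \<noteq> i \<and> G i j = Friends}"

definition enemies :: "('a \<Rightarrow> 'a \<Rightarrow> relation) \<Rightarrow> 'a \<Rightarrow> 'a set" where
  "enemies G i = {j. j \<noteq> i \<and> G i j = Enemies}"

definition structural_balance :: "('a \<Rightarrow> 'a \<Rightarrow> relation) \<Rightarrow> bool" where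
  "structural_balance G \<longleftrightarrow>
    (\<forall>i j k. i \<noteq> j \<and> j \<noteq> k \<and> i \<noteq> k \<longrightarrow>
       (j \<in> friends G i \<and> k \<in> friends G j \<longrightarrow> k \<in> friends G i) \<and>
       (j \<in> enemies G i \<and> k \<in> enemies G j \<longrightarrow> k \<in> friends G i) \<and>
       (j \<in> enemies G i \<and> k \<in> friends G j \<longrightarrow> k \<in> enemies G i))"

definition F_edge :: "('a \<Rightarrow> 'a \<Rightarrow> relation) \<Rightarrow> 'a \<Rightarrow> 'a \<Rightarrow> bool" where
  "F_edge G i j \<longleftrightarrow> j \<in> friends G i"

definition EF_edge :: "('a \<Rightarrow> 'a \<Rightarrow> relation) \<Rightarrow> 'a \<Rightarrow> 'a \<Rightarrow> bool" where
  "EF_edge G i j \<longleftrightarrow> j \<in> friends G i \<or> j \<in> enemies G i"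

definition F_components :: "('a \<Rightarrow> 'a \<Rightarrow> relation) \<Rightarrow> 'a set set" where
  "F_components G = {{j. (F_edge G)\<^sup>*\<^sup>* i j} | i. True}"

definition EF_components :: "('a \<Rightarrow> 'a \<Rightarrow> relation) \<Rightarrow> 'a set set" where
  "EF_components G = {{j. (EF_edge G)\<^sup>*\<^sup>* i j} | i. True}"

definition strict_pref :: "('a::finite \<Rightarrow> 'a \<Rightarrow> relation) \<Rightarrow> real \<Rightarrow> real \<Rightarrow> 'a
    \<Rightarrow> ('a \<Rightarrow> real) \<Rightarrow> ('a \<Rightarrow> real) \<Rightarrow> bool" where
  "strict_pref G w_f w_e i p p' \<longleftrightarrow>
     p i > p' i \<or>
     (p i = p' i \<and>
      w_f * (\<Sum>j\<in>friends G i. p j - p' j) - w_e * (\<Sum>j\<in>enemies G i. p j - p' j) > 0)"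

definition weak_pref :: "('a::finite \<Rightarrow> 'a \<Rightarrow> relation) \<Rightarrow> real \<Rightarrow> real \<Rightarrow> 'a
    \<Rightarrow> ('a \<Rightarrow> real) \<Rightarrow> ('a \<Rightarrow> real) \<Rightarrow> bool" where
  "weak_pref G w_f w_e i p p' \<longleftrightarrow> \<not> strict_pref G w_f w_e i p' p"

definition mechanism :: "(('a \<Rightarrow> 'a set) \<Rightarrow> ('a \<Rightarrow> real)) \<Rightarrow> bool" where
  "mechanism g \<longleftrightarrow> (\<forall>m i. 0 \<le> g m i \<and> g m i \<le> 1)"

definition valid :: "(('a::finite \<Rightarrow> 'a set) \<Rightarrow> ('a \<Rightarrow> real)) \<Rightarrow> bool" where
  "valid g \<longleftrightarrow> (\<forall>m. (\<Sum>i\<in>UNIV. g m i) \<le> 1)"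

definition DSIC :: "('a::finite \<Rightarrow> 'a \<Rightarrow> relation) \<Rightarrow> real \<Rightarrow> real
    \<Rightarrow> (('a \<Rightarrow> 'a set) \<Rightarrow> ('a \<Rightarrow> real)) \<Rightarrow> bool" where
  "DSIC G w_f w_e g \<longleftrightarrow>
     (\<forall>i m m'. weak_pref G w_f w_e i (g m) (g (m(i := m'))))"

definition efficient :: "(('a::finite \<Rightarrow> 'a set) \<Rightarrow> ('a \<Rightarrow> real)) \<Rightarrow> bool" where
  "efficient g \<longleftrightarrow> (\<forall>N. N \<noteq> {} \<longrightarrow> (\<Sum>i\<in>N. g (\<lambda>_. N) i) = 1)"

end

theory Submission
  imports Defs
begin

(* Under structural balance every EF-component is the union of at most two F-components, and
   an agent's friends and enemies lie in its own EF-component.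

   If there are three EF-components, every agent is judged by two referees taken from the other
   two components: it receives 1/|N| when both referees report the same set N containing it.  Any
   two referee pairs drawn from three agents overlap, so all payments come from one agreed set,
   and no agent can influence the share of anybody in its own EF-component.  If everybody is
   friends with everybody, the referees are three fixed agents (nobody judging itself) and a
   fourth agent absorbs the undistributed remainder, so an agent's friends always receive exactly
   one minus its own share.

   Conversely, DSIC forces both an agent's own share and w_f times the share of its F-component
   minus w_e times the share of its enemies to be independent of its report; as the second
   quantity is the same for the whole F-component, it is independent of the reports of the whole
   F-component.  Starting from the profile in which everybody reports {a}, and letting first the
   enemies of a, then a's F-component switch their reports, a's F-component keeps the entire
   share.  With a single EF-component this forces everybody to be a friend of a.  With two
   EF-components, let each of them name a member of the other: then an F-component inside each
   of them would receive the entire share. *)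

lemma eq_if_invariant_under_updates:
  assumes "finite S"
    and "\<And>f j y. j \<in> S \<Longrightarrow> P (f(j := y)) = P f"
    and "\<And>k. k \<notin> S \<Longrightarrow> f k = f' k"
  shows "P f = P f'"
  using assms
proof (induction S arbitrary: f rule: finite_induct)
  case empty
  then have "f = f'" by auto
  then show ?case by simp
next
  case (insert x S)
  have "P f = P (f(x := f' x))"
    by (rule insert.prems(1)[symmetric]) simp
  also have "\<dots> = P f'"
    using insert.prems by (intro insert.IH) auto
  finally show ?case .
qed

lemma rtranclp_iff_in_class:
  assumes C_eq: "\<And>i. C i = insert i {j. R i j}"
    and C_closed: "\<And>i j. R i j \<Longrightarrow> C j = C i"
  shows "R\<^sup>*\<^sup>* i j \<longleftrightarrow> j \<in> C i"
proof
  assume "R\<^sup>*\<^sup>* i j"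
  then show "j \<in> C i"
  proof (induction rule: rtranclp_induct)
    case (step y z)
    have "y = i \<or> R i y"
      using step.IH C_eq by auto
    then have "C y = C i"
      using C_closed by auto
    with step.hyps(2) show ?case
      using C_eq C_closed by blast
  qed (simp add: C_eq)
qed (use C_eq in auto)

lemma card_range_eq_1_iff:
  assumes "\<And>i. i \<in> C i"
  shows "card (range C) = 1 \<longleftrightarrow> (\<forall>i. C i = UNIV)"
proof
  assume "card (range C) = 1"
  then obtain S where "range C = {S}"
    by (auto simp: card_1_singleton_iff)
  then show "\<forall>i. C i = UNIV"
    using assms by (metis UNIV_eq_I insertI1 range_eqI singletonD)
next
  assume "\<forall>i. C i = UNIV"
  then have "range C = {UNIV}" by auto
  then show "card (range C) = 1" by simp
qed

lemma card_range_eq_2E: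
  assumes "\<And>i. i \<in> C i" and "card (range C) = 2"
  obtains a c where "C a \<union> C c = UNIV" and "C a \<noteq> C c"
proof -
  obtain X Y where XY: "range C = {X, Y}" "X \<noteq> Y"
    using assms(2) card_2_iff by metis
  then obtain a c where "X = C a" "Y = C c"
    by (metis insertI1 insertI2 rangeE)
  moreover have "i \<in> X \<union> Y" for i
    using assms(1)[of i] XY(1) by blast
  ultimately show ?thesis
    using that XY(2) by blast
qed

lemma full_share_iff_weighted_difference:
  fixes X E w_f w_e :: real
  assumes "0 \<le> X" "0 \<le> E" "X + E \<le> 1" "0 < w_f" "0 < w_e"
  shows "X = 1 \<longleftrightarrow> w_f * X - w_e * E = w_f"
    and "X = 1 \<longleftrightarrow> w_f * E - w_e * X = - w_e"
proof -
  have "X \<le> 1" using assms(2,3) by linarith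
  show "X = 1 \<longleftrightarrow> w_f * X - w_e * E = w_f"
  proof
    assume "w_f * X - w_e * E = w_f"
    then have "w_f * 1 \<le> w_f * X"
      using assms(2,5) by (simp add: algebra_simps)
    then show "X = 1"
      using \<open>X \<le> 1\<close> assms(4) by simp
  qed (use assms in simp)
  show "X = 1 \<longleftrightarrow> w_f * E - w_e * X = - w_e"
  proof
    assume "w_f * E - w_e * X = - w_e"
    then have "w_e * (1 - X) + w_f * E = 0"
      by (simp add: algebra_simps)
    moreover have "0 \<le> w_e * (1 - X)" "0 \<le> w_f * E"
      using \<open>X \<le> 1\<close> assms by simp_all
    ultimately have "w_e * (1 - X) = 0"
      by linarith
    then show "X = 1"
      using assms(5) by simp
  qed (use assms in simp)
qed

lemma sum_le_1_if_valid:
  assumes "mechanism g" and "valid g"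
  shows "(\<Sum>j\<in>X. g m j) \<le> 1"
proof -
  have "(\<Sum>j\<in>X. g m j) \<le> (\<Sum>j\<in>UNIV. g m j)"
    using assms(1) by (intro sum_mono2) (auto simp: mechanism_def)
  also have "\<dots> \<le> 1"
    using assms(2) by (simp add: valid_def)
  finally show ?thesis .
qed

lemma sum_eq_0_if_disjoint_from_full_share:
  assumes "mechanism g" and "valid g" and "A \<inter> B = {}" and "(\<Sum>j\<in>A. g m j) = 1"
  shows "(\<Sum>j\<in>B. g m j) = 0"
proof -
  have "(\<Sum>j\<in>A. g m j) + (\<Sum>j\<in>B. g m j) \<le> 1"
    using sum_le_1_if_valid[OF assms(1,2), where X = "A \<union> B"] assms(3)
    by (simp add: sum.union_disjoint)
  moreover have "0 \<le> (\<Sum>j\<in>B. g m j)"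
    using assms(1) by (simp add: mechanism_def sum_nonneg)
  ultimately show ?thesis
    using assms(4) by linarith
qed

lemma efficient_unanimous:
  assumes "efficient g"
  shows "g (\<lambda>_. {a}) a = 1"
proof -
  have "(\<Sum>i\<in>{a}. g (\<lambda>_. {a}) i) = 1"
    using assms unfolding efficient_def by blast
  then show ?thesis by simp
qed

definition fclass :: "('a \<Rightarrow> 'a \<Rightarrow> relation) \<Rightarrow> 'a \<Rightarrow> 'a set" where
  "fclass G i = insert i (friends G i)"

definition efclass :: "('a \<Rightarrow> 'a \<Rightarrow> relation) \<Rightarrow> 'a \<Rightarrow> 'a set" where
  "efclass G i = insert i (friends G i \<union> enemies G i)"

lemma self_in_fclass [simp]: "i \<in> fclass G i"
  by (simp add: fclass_def)

lemma self_in_efclass [simp]: "i \<in> efclass G i"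
  by (simp add: efclass_def)

lemma fclass_disjoint_enemies: "fclass G i \<inter> enemies G i = {}"
  by (auto simp: fclass_def friends_def enemies_def)

lemma efclass_eq_fclass_Un_enemies: "efclass G i = fclass G i \<union> enemies G i"
  by (simp add: efclass_def fclass_def)

lemma friends_disjoint_enemies: "j \<in> friends G i \<Longrightarrow> j \<notin> enemies G i"
  by (simp add: friends_def enemies_def)

(* Unlike the tie-breaking term of i's preference, this includes i's own share, which makes it
   a function of i's F-component alone. *)
definition fclass_utility :: "('a::finite \<Rightarrow> 'a \<Rightarrow> relation) \<Rightarrow> real \<Rightarrow> real \<Rightarrow> 'a
    \<Rightarrow> ('a \<Rightarrow> real) \<Rightarrow> real" where
  "fclass_utility G w_f w_e i p =
     w_f * (\<Sum>j\<in>fclass G i. p j) - w_e * (\<Sum>j\<in>enemies G i. p j)"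

lemma fclass_utility_eq:
  "fclass_utility G w_f w_e i p =
     w_f * p i + (w_f * (\<Sum>j\<in>friends G i. p j) - w_e * (\<Sum>j\<in>enemies G i. p j))"
  by (simp add: fclass_utility_def fclass_def friends_def algebra_simps)

lemma strict_pref_iff_fclass_utility:
  "strict_pref G w_f w_e i p q \<longleftrightarrow>
     q i < p i \<or> (p i = q i \<and> fclass_utility G w_f w_e i q < fclass_utility G w_f w_e i p)"
proof -
  have "fclass_utility G w_f w_e i p - fclass_utility G w_f w_e i q =
      w_f * (p i - q i) + (w_f * (\<Sum>j\<in>friends G i. p j - q j) - w_e * (\<Sum>j\<in>enemies G i. p j - q j))"
    by (simp add: fclass_utility_eq sum_subtractf algebra_simps)
  then show ?thesis
    unfolding strict_pref_def by auto
qed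

lemma DSIC_iff:
  "DSIC G w_f w_e g \<longleftrightarrow>
     (\<forall>i m M. g (m(i := M)) i = g m i \<and>
        fclass_utility G w_f w_e i (g (m(i := M))) = fclass_utility G w_f w_e i (g m))"
proof
  assume dsic: "DSIC G w_f w_e g"
  show "\<forall>i m M. g (m(i := M)) i = g m i \<and>
        fclass_utility G w_f w_e i (g (m(i := M))) = fclass_utility G w_f w_e i (g m)"
  proof (intro allI)
    fix i m M
    have "\<not> strict_pref G w_f w_e i (g (m(i := M))) (g m)"
      using dsic by (simp add: DSIC_def weak_pref_def)
    moreover have "\<not> strict_pref G w_f w_e i (g m) (g (m(i := M)))"
      using dsic[unfolded DSIC_def weak_pref_def, rule_format, of i "m(i := M)" "m i"] by simp
    ultimately show "g (m(i := M)) i = g m i \<and>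
        fclass_utility G w_f w_e i (g (m(i := M))) = fclass_utility G w_f w_e i (g m)"
      unfolding strict_pref_iff_fclass_utility by linarith
  qed
qed (simp add: DSIC_def weak_pref_def strict_pref_iff_fclass_utility)

definition referee_mechanism :: "('a \<Rightarrow> 'a \<times> 'a) \<Rightarrow> ('a \<Rightarrow> 'a set) \<Rightarrow> 'a \<Rightarrow> real" where
  "referee_mechanism r m i =
     (if i \<in> m (fst (r i)) \<and> m (snd (r i)) = m (fst (r i)) then 1 / card (m (fst (r i))) else 0)"

lemma referee_mechanism_nonneg: "0 \<le> referee_mechanism r m i"
  by (simp add: referee_mechanism_def)

lemma referee_mechanism_le_1: "referee_mechanism r m (i::'a::finite) \<le> 1"
proof (cases "i \<in> m (fst (r i))")
  case True
  then have "0 < card (m (fst (r i)))"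
    by (auto simp: card_gt_0_iff)
  then show ?thesis
    by (simp add: referee_mechanism_def)
qed (simp add: referee_mechanism_def)

lemma mechanism_referee_mechanism: "mechanism (referee_mechanism (r :: 'a::finite \<Rightarrow> 'a \<times> 'a))"
  by (simp add: mechanism_def referee_mechanism_nonneg referee_mechanism_le_1)

lemma referee_mechanism_fun_upd:
  assumes "j \<noteq> fst (r i)" and "j \<noteq> snd (r i)"
  shows "referee_mechanism r (m(j := M)) i = referee_mechanism r m i"
  using assms by (simp add: referee_mechanism_def)

lemma efficient_referee_mechanism: "efficient (referee_mechanism (r :: 'a::finite \<Rightarrow> 'a \<times> 'a))"
  unfolding efficient_def
proof (intro allI impI)
  fix N :: "'a set"
  assume "N \<noteq> {}"
  then show "(\<Sum>i\<in>N. referee_mechanism r (\<lambda>_. N) i) = 1"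
    by (simp add: referee_mechanism_def card_gt_0_iff)
qed

(* Any two referee pairs share an agent, so all paid agents are paid out of one agreed set. *)
lemma valid_referee_mechanism:
  fixes r :: "'a::finite \<Rightarrow> 'a \<times> 'a"
  assumes "\<And>i j. {fst (r i), snd (r i)} \<inter> {fst (r j), snd (r j)} \<noteq> {}"
  shows "valid (referee_mechanism r)"
  unfolding valid_def
proof
  fix m
  show "(\<Sum>i\<in>UNIV. referee_mechanism r m i) \<le> 1"
  proof (cases "\<exists>k. referee_mechanism r m k \<noteq> 0")
    case True
    then obtain k where "referee_mechanism r m k \<noteq> 0" ..
    then have k: "m (snd (r k)) = m (fst (r k))"
      by (auto simp: referee_mechanism_def split: if_splits)
    define N where "N = m (fst (r k))"
    have "referee_mechanism r m i \<le> (if i \<in> N then 1 / card N else 0)" for i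
    proof (cases "i \<in> m (fst (r i)) \<and> m (snd (r i)) = m (fst (r i))")
      case True
      moreover obtain z where "z \<in> {fst (r i), snd (r i)}" "z \<in> {fst (r k), snd (r k)}"
        using assms[of i k] by blast
      ultimately have "m (fst (r i)) = N"
        using k unfolding N_def by auto
      then show ?thesis
        using True by (simp add: referee_mechanism_def)
    qed (auto simp: referee_mechanism_def)
    then have "(\<Sum>i\<in>UNIV. referee_mechanism r m i) \<le> (\<Sum>i\<in>UNIV. if i \<in> N then 1 / card N else 0)"
      by (rule sum_mono)
    also have "\<dots> = (\<Sum>i\<in>N. 1 / card N)"
      by (simp add: sum.If_cases)
    also have "\<dots> \<le> 1"
      by (cases "N = {}") (simp_all add: card_gt_0_iff)
    finally show ?thesis .
  qed simp
qed

definition top_up :: "'a \<Rightarrow> (('a \<Rightarrow> 'a set) \<Rightarrow> 'a \<Rightarrow> real) \<Rightarrow> ('a \<Rightarrow> 'a set) \<Rightarrow> 'a \<Rightarrow> real"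
  where "top_up d h m i = h m i + (if i = d then 1 - (\<Sum>k\<in>UNIV. h m k) else 0)"

lemma sum_top_up: "(\<Sum>i\<in>UNIV. top_up d h m (i::'a::finite)) = 1"
  by (simp add: top_up_def sum.distrib)

lemma valid_top_up: "valid (top_up d (h :: ('a::finite \<Rightarrow> 'a set) \<Rightarrow> 'a \<Rightarrow> real))"
  by (simp add: valid_def sum_top_up)

lemma mechanism_top_up:
  assumes "mechanism h" and "valid h"
  shows "mechanism (top_up d h)"
  unfolding mechanism_def
proof (intro allI conjI)
  fix m i
  have "0 \<le> h m i" "h m i \<le> 1" "(\<Sum>k\<in>UNIV. h m k) \<le> 1"
    using assms by (simp_all add: mechanism_def valid_def)
  moreover have "h m d \<le> (\<Sum>k\<in>UNIV. h m k)"
    using assms(1) by (intro member_le_sum) (simp_all add: mechanism_def)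
  ultimately show "0 \<le> top_up d h m i" "top_up d h m i \<le> 1"
    by (simp_all add: top_up_def)
qed

lemma efficient_top_up:
  assumes "mechanism h" and "valid h" and "efficient h"
  shows "efficient (top_up d h)"
  unfolding efficient_def
proof (intro allI impI)
  fix N :: "'a set"
  assume "N \<noteq> {}"
  then have N_share: "(\<Sum>k\<in>N. h (\<lambda>_. N) k) = 1"
    using assms(3) by (simp add: efficient_def)
  moreover have "(\<Sum>k\<in>N. h (\<lambda>_. N) k) \<le> (\<Sum>k\<in>UNIV. h (\<lambda>_. N) k)"
    using assms(1) by (intro sum_mono2) (simp_all add: mechanism_def)
  ultimately have "(\<Sum>k\<in>UNIV. h (\<lambda>_. N) k) = 1"
    using sum_le_1_if_valid[OF assms(1,2)] by (metis antisym)
  then have "top_up d h (\<lambda>_. N) i = h (\<lambda>_. N) i" for i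
    by (simp add: top_up_def)
  then show "(\<Sum>i\<in>N. top_up d h (\<lambda>_. N) i) = 1"
    using N_share by simp
qed

lemma mechanism_exists_if_all_friends:
  fixes G :: "'a::finite \<Rightarrow> 'a \<Rightarrow> relation"
  assumes "4 \<le> card (UNIV :: 'a set)" and all_friends: "\<And>i. fclass G i = UNIV"
  shows "\<exists>g. mechanism g \<and> valid g \<and> efficient g \<and> DSIC G w_f w_e g"
proof -
  obtain T :: "'a set" where "card T = 4"
    using obtain_subset_with_card_n[OF assms(1)] by metis
  then obtain d where "d \<in> T"
    by fastforce
  with \<open>card T = 4\<close> have "card (T - {d}) = 3"
    by simp
  then obtain a b c where abc: "T - {d} = {a, b, c}" "a \<noteq> b" "b \<noteq> c" "a \<noteq> c"
    unfolding card_3_iff by blast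
  have d_ne: "d \<noteq> a" "d \<noteq> b" "d \<noteq> c"
    using abc(1) by auto
  define r where "r i = (if i = a then (b, c) else if i = b then (a, c) else (a, b))" for i
  define h where "h = referee_mechanism r"
  define g where "g = top_up d h"
  have "valid h"
    unfolding h_def by (intro valid_referee_mechanism) (simp add: r_def)
  then have "mechanism g" "valid g" "efficient g"
    unfolding g_def h_def
    by (simp_all add: mechanism_top_up valid_top_up efficient_top_up
        mechanism_referee_mechanism efficient_referee_mechanism)
  moreover have "DSIC G w_f w_e g"
    unfolding DSIC_iff
  proof (intro allI conjI)
    fix i m M
    have d_not_referee: "h (m(d := M')) = h m" for m M'
      unfolding h_def using d_ne by (intro ext referee_mechanism_fun_upd) (simp_all add: r_def)
    have not_own_referee: "h (m(i := M')) i = h m i" for m M'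
      unfolding h_def using abc(2-4) by (intro referee_mechanism_fun_upd) (simp_all add: r_def)
    show "g (m(i := M)) i = g m i"
      by (cases "i = d") (simp_all add: g_def top_up_def d_not_referee not_own_referee)
    have "enemies G i = {}"
      using fclass_disjoint_enemies[of G i] by (simp add: all_friends)
    then have "fclass_utility G w_f w_e i p = w_f * (\<Sum>j\<in>UNIV. p j)" for p
      by (simp add: fclass_utility_def all_friends)
    then show "fclass_utility G w_f w_e i (g (m(i := M))) = fclass_utility G w_f w_e i (g m)"
      by (simp add: g_def sum_top_up)
  qed
  ultimately show ?thesis by blast
qed

locale balanced_network =
  fixes G :: "'a::finite \<Rightarrow> 'a \<Rightarrow> relation"
  assumes network: "network G" and balanced: "structural_balance G"
begin

lemma friends_sym: "j \<in> friends G i \<Longrightarrow> i \<in> friends G j"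
  using network by (auto simp: friends_def network_def)

lemma enemies_sym: "j \<in> enemies G i \<Longrightarrow> i \<in> enemies G j"
  using network by (auto simp: enemies_def network_def)

lemma friend_of_friend:
  assumes "j \<in> friends G i" and "k \<in> friends G j" and "k \<noteq> i"
  shows "k \<in> friends G i"
proof -
  have "i \<noteq> j" "j \<noteq> k"
    using assms by (auto simp: friends_def)
  with assms balanced show ?thesis
    unfolding structural_balance_def by blast
qed

lemma enemy_of_enemy:
  assumes "j \<in> enemies G i" and "k \<in> enemies G j" and "k \<noteq> i"
  shows "k \<in> friends G i"
proof -
  have "i \<noteq> j" "j \<noteq> k"
    using assms by (auto simp: enemies_def)
  with assms balanced show ?thesis
    unfolding structural_balance_def by blast
qed

lemma friend_of_enemy:
  assumes "j \<in> enemies G i" and "k \<in> friends G j" and "k \<noteq> i"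
  shows "k \<in> enemies G i"
proof -
  have "i \<noteq> j" "j \<noteq> k"
    using assms by (auto simp: enemies_def friends_def)
  with assms balanced show ?thesis
    unfolding structural_balance_def by blast
qed

lemma enemy_of_friend:
  assumes "j \<in> friends G i" and "k \<in> enemies G j" and "k \<noteq> i"
  shows "k \<in> enemies G i"
proof -
  have "i \<in> enemies G k"
    using friend_of_enemy[OF enemies_sym[OF assms(2)] friends_sym[OF assms(1)]] assms(3) by simp
  then show ?thesis
    by (rule enemies_sym)
qed

lemma fclass_enemies_eq_if_friend:
  assumes "j \<in> friends G i"
  shows "fclass G j = fclass G i" and "enemies G j = enemies G i"
proof -
  have "insert j (friends G j) \<subseteq> insert i (friends G i)"
    using assms friend_of_friend by blast
  moreover have "insert i (friends G i) \<subseteq> insert j (friends G j)"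
    using friends_sym[OF assms] friend_of_friend by blast
  ultimately show "fclass G j = fclass G i"
    unfolding fclass_def by blast
  have "enemies G j \<subseteq> enemies G i"
    using assms enemy_of_friend friends_disjoint_enemies[where G = G] friends_sym by blast
  moreover have "enemies G i \<subseteq> enemies G j"
    using friends_sym[OF assms] enemy_of_friend friends_disjoint_enemies[where G = G] assms by blast
  ultimately show "enemies G j = enemies G i" by blast
qed

lemma fclass_enemies_swap_if_enemy:
  assumes "j \<in> enemies G i"
  shows "fclass G j = enemies G i" and "enemies G j = fclass G i"
proof -
  have "insert j (friends G j) \<subseteq> enemies G i"
    using assms friend_of_enemy enemies_sym friends_disjoint_enemies[where G = G] by blast
  moreover have "enemies G i \<subseteq> insert j (friends G j)"
    using enemies_sym[OF assms] enemy_of_enemy by blast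
  ultimately show "fclass G j = enemies G i"
    unfolding fclass_def by blast
  have "enemies G j \<subseteq> insert i (friends G i)"
    using assms enemy_of_enemy by blast
  moreover have "insert i (friends G i) \<subseteq> enemies G j"
    using enemies_sym[OF assms] friend_of_enemy friends_disjoint_enemies[where G = G] assms by blast
  ultimately show "enemies G j = fclass G i"
    unfolding fclass_def by blast
qed

lemma mem_efclass_iff: "j \<in> efclass G i \<longleftrightarrow> efclass G j = efclass G i"
proof
  assume "j \<in> efclass G i"
  then consider "j = i" | "j \<in> friends G i" | "j \<in> enemies G i"
    by (auto simp: efclass_def)
  then show "efclass G j = efclass G i"
  proof cases
    case 2
    then show ?thesis
      using fclass_enemies_eq_if_friend by (simp add: efclass_eq_fclass_Un_enemies)
  next
    case 3
    then show ?thesis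
      using fclass_enemies_swap_if_enemy by (simp add: efclass_eq_fclass_Un_enemies Un_commute)
  qed simp
next
  assume "efclass G j = efclass G i"
  then show "j \<in> efclass G i"
    by (metis self_in_efclass)
qed

lemma F_components_eq: "F_components G = range (fclass G)"
proof -
  have "(F_edge G)\<^sup>*\<^sup>* i j \<longleftrightarrow> j \<in> fclass G i" for i j
  proof (rule rtranclp_iff_in_class)
    show "fclass G k = insert k {l. F_edge G k l}" for k
      by (simp add: fclass_def F_edge_def)
    show "fclass G l = fclass G k" if "F_edge G k l" for k l
      using that by (simp add: F_edge_def fclass_enemies_eq_if_friend)
  qed
  then show ?thesis
    unfolding F_components_def by auto
qed

lemma EF_components_eq: "EF_components G = range (efclass G)"
proof -
  have "(EF_edge G)\<^sup>*\<^sup>* i j \<longleftrightarrow> j \<in> efclass G i" for i j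
  proof (rule rtranclp_iff_in_class)
    show "efclass G k = insert k {l. EF_edge G k l}" for k
      by (auto simp: efclass_def EF_edge_def)
    show "efclass G l = efclass G k" if "EF_edge G k l" for k l
    proof -
      have "l \<in> efclass G k"
        using that by (auto simp: efclass_def EF_edge_def)
      then show ?thesis
        by (simp add: mem_efclass_iff)
    qed
  qed
  then show ?thesis
    unfolding EF_components_def by auto
qed

lemma card_F_components_eq_1_iff: "card (F_components G) = 1 \<longleftrightarrow> (\<forall>i. fclass G i = UNIV)"
  unfolding F_components_eq by (rule card_range_eq_1_iff) simp

lemma fclass_utility_fun_upd:
  assumes "DSIC G w_f w_e g" and "j \<in> fclass G i"
  shows "fclass_utility G w_f w_e i (g (m(j := M))) = fclass_utility G w_f w_e i (g m)"
proof -
  have "fclass_utility G w_f w_e j = fclass_utility G w_f w_e i"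
  proof (cases "j = i")
    case False
    then have "j \<in> friends G i"
      using assms(2) by (simp add: fclass_def)
    then show ?thesis
      by (simp add: fun_eq_iff fclass_utility_def fclass_enemies_eq_if_friend)
  qed simp
  with assms(1) show ?thesis
    unfolding DSIC_iff by metis
qed

lemma fclass_utility_eq_if_agree_outside_fclass:
  assumes "DSIC G w_f w_e g" and "\<And>k. k \<notin> fclass G i \<Longrightarrow> m k = m' k"
  shows "fclass_utility G w_f w_e i (g m) = fclass_utility G w_f w_e i (g m')"
  by (rule eq_if_invariant_under_updates[where S = "fclass G i"
        and P = "\<lambda>m. fclass_utility G w_f w_e i (g m)"])
    (simp_all add: fclass_utility_fun_upd[OF assms(1)] assms(2))

lemma mechanism_exists_if_three_EF_components:
  assumes "3 \<le> card (EF_components G)"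
  shows "\<exists>g. mechanism g \<and> valid g \<and> efficient g \<and> DSIC G w_f w_e g"
proof -
  obtain S where S: "S \<subseteq> range (efclass G)" "card S = 3"
    using obtain_subset_with_card_n assms unfolding EF_components_eq by metis
  then obtain X Y Z where XYZ: "S = {X, Y, Z}" "X \<noteq> Y" "Y \<noteq> Z" "X \<noteq> Z"
    unfolding card_3_iff by blast
  then obtain a b c where "X = efclass G a" "Y = efclass G b" "Z = efclass G c"
    using S(1) by (metis insert_subset rangeE)
  with XYZ have distinct: "efclass G a \<noteq> efclass G b" "efclass G b \<noteq> efclass G c"
      "efclass G a \<noteq> efclass G c"
    by simp_all
  define r where "r i = (if efclass G i = efclass G a then (b, c)
      else if efclass G i = efclass G b then (a, c) else (a, b))" for i
  define g where "g = referee_mechanism r"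
  have referees_outside: "fst (r i) \<notin> efclass G i" "snd (r i) \<notin> efclass G i" for i
    using distinct by (simp_all add: r_def mem_efclass_iff)
  have "valid g"
    unfolding g_def by (intro valid_referee_mechanism) (simp add: r_def)
  moreover have "DSIC G w_f w_e g"
    unfolding DSIC_iff
  proof (intro allI conjI)
    fix i m M
    have unaffected: "g (m(i := M)) k = g m k" if "k \<in> efclass G i" for k
    proof -
      have "i \<in> efclass G k"
        using that by (simp add: mem_efclass_iff)
      then show ?thesis
        unfolding g_def using referees_outside[of k]
        by (intro referee_mechanism_fun_upd) auto
    qed
    then show "g (m(i := M)) i = g m i"
      by (simp add: efclass_def)
    show "fclass_utility G w_f w_e i (g (m(i := M))) = fclass_utility G w_f w_e i (g m)"
      unfolding fclass_utility_def using unaffected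
      by (simp add: efclass_eq_fclass_Un_enemies)
  qed
  ultimately show ?thesis
    using mechanism_referee_mechanism efficient_referee_mechanism unfolding g_def by blast
qed

end

locale efficient_DSIC_mechanism = balanced_network G
  for G :: "'a::finite \<Rightarrow> 'a \<Rightarrow> relation" +
  fixes w_f w_e :: real and g :: "('a \<Rightarrow> 'a set) \<Rightarrow> 'a \<Rightarrow> real"
  assumes w_f_pos: "0 < w_f" and w_e_pos: "0 < w_e"
    and mechanism: "mechanism g" and valid: "valid g" and efficient: "efficient g"
    and DSIC: "DSIC G w_f w_e g"
begin

lemma fclass_share_eq_1_iff:
  shows "(\<Sum>j\<in>fclass G a. g m j) = 1 \<longleftrightarrow> fclass_utility G w_f w_e a (g m) = w_f"
    and "e \<in> enemies G a \<Longrightarrow>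
      (\<Sum>j\<in>fclass G a. g m j) = 1 \<longleftrightarrow> fclass_utility G w_f w_e e (g m) = - w_e"
proof -
  have nonneg: "0 \<le> (\<Sum>j\<in>A. g m j)" for A
    using mechanism by (simp add: mechanism_def sum_nonneg)
  have "(\<Sum>j\<in>fclass G a. g m j) + (\<Sum>j\<in>enemies G a. g m j) \<le> 1"
    using sum_le_1_if_valid[OF mechanism valid, where X = "fclass G a \<union> enemies G a"]
      fclass_disjoint_enemies[of G a]
    by (simp add: sum.union_disjoint)
  note weighted = full_share_iff_weighted_difference[OF nonneg nonneg this w_f_pos w_e_pos]
  show "(\<Sum>j\<in>fclass G a. g m j) = 1 \<longleftrightarrow> fclass_utility G w_f w_e a (g m) = w_f"
    unfolding fclass_utility_def by (rule weighted(1))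
  show "(\<Sum>j\<in>fclass G a. g m j) = 1 \<longleftrightarrow> fclass_utility G w_f w_e e (g m) = - w_e"
    if "e \<in> enemies G a"
    unfolding fclass_utility_def fclass_enemies_swap_if_enemy[OF that] by (rule weighted(2))
qed

lemma fclass_share_eq_1_if_outsiders_report:
  "(\<Sum>j\<in>fclass G a. g (\<lambda>j. if j \<in> efclass G a then N else {a}) j) = 1"
proof -
  define U where "U = (\<lambda>_::'a. {a})"
  define P where "P = (\<lambda>j. if j \<in> enemies G a then N else {a})"
  have "g U a \<le> (\<Sum>j\<in>fclass G a. g U j)"
    using mechanism by (intro member_le_sum) (simp_all add: fclass_def mechanism_def)
  then have "1 \<le> (\<Sum>j\<in>fclass G a. g U j)"
    using efficient_unanimous[OF efficient, of a] by (simp add: U_def)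
  then have U_share: "(\<Sum>j\<in>fclass G a. g U j) = 1"
    using sum_le_1_if_valid[OF mechanism valid] by (simp add: antisym)
  have "(\<Sum>j\<in>fclass G a. g P j) = 1"
  proof (cases "enemies G a = {}")
    case True
    then show ?thesis
      using U_share by (simp add: P_def U_def)
  next
    case False
    then obtain e where e: "e \<in> enemies G a" by blast
    have "fclass_utility G w_f w_e e (g P) = fclass_utility G w_f w_e e (g U)"
      using DSIC by (rule fclass_utility_eq_if_agree_outside_fclass)
        (simp add: P_def U_def fclass_enemies_swap_if_enemy[OF e])
    then show ?thesis
      using U_share fclass_share_eq_1_iff(2)[OF e] by simp
  qed
  moreover have "fclass_utility G w_f w_e a (g (\<lambda>j. if j \<in> efclass G a then N else {a})) =
      fclass_utility G w_f w_e a (g P)"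
    using DSIC by (rule fclass_utility_eq_if_agree_outside_fclass)
      (simp add: P_def efclass_eq_fclass_Un_enemies)
  ultimately show ?thesis
    using fclass_share_eq_1_iff(1) by simp
qed

lemma fclass_eq_UNIV_if_efclass_eq_UNIV:
  assumes "efclass G a = UNIV"
  shows "fclass G a = UNIV"
proof (rule ccontr)
  assume "fclass G a \<noteq> UNIV"
  then obtain b where b: "b \<notin> fclass G a" by blast
  have "(\<Sum>j\<in>fclass G a. g (\<lambda>_. {b}) j) = 1"
    using fclass_share_eq_1_if_outsiders_report[of a "{b}"] assms by simp
  then have "(\<Sum>j\<in>{b}. g (\<lambda>_. {b}) j) = 0"
    using b by (intro sum_eq_0_if_disjoint_from_full_share[OF mechanism valid]) auto
  with efficient_unanimous[OF efficient, of b] show False by simp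
qed

lemma two_EF_components_impossible:
  assumes cover: "efclass G a \<union> efclass G c = UNIV" and distinct: "efclass G a \<noteq> efclass G c"
  shows False
proof -
  have disjoint: "efclass G a \<inter> efclass G c = {}"
    using distinct mem_efclass_iff by blast
  define P where "P = (\<lambda>j. if j \<in> efclass G a then {c} else {a})"
  have "P = (\<lambda>j. if j \<in> efclass G c then {a} else {c})"
    using cover disjoint by (auto simp: P_def fun_eq_iff)
  then have "(\<Sum>j\<in>fclass G c. g P j) = 1"
    using fclass_share_eq_1_if_outsiders_report[of c "{a}"] by simp
  moreover have "(\<Sum>j\<in>fclass G a. g P j) = 1"
    using fclass_share_eq_1_if_outsiders_report[of a "{c}"] by (simp add: P_def)
  moreover have "fclass G a \<inter> fclass G c = {}"
    using disjoint by (auto simp: efclass_eq_fclass_Un_enemies)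
  ultimately show False
    using sum_eq_0_if_disjoint_from_full_share[OF mechanism valid] by fastforce
qed

lemma one_F_component_or_three_EF_components:
  "card (F_components G) = 1 \<or> 3 \<le> card (EF_components G)"
proof -
  have "card (range (efclass G)) \<noteq> 0"
    by simp
  then consider "card (range (efclass G)) = 1" | "card (range (efclass G)) = 2"
    | "3 \<le> card (range (efclass G))"
    by linarith
  then show ?thesis
  proof cases
    case 1
    then have "\<forall>i. efclass G i = UNIV"
      using card_range_eq_1_iff[of "efclass G"] by simp
    then show ?thesis
      using card_F_components_eq_1_iff fclass_eq_UNIV_if_efclass_eq_UNIV by blast
  next
    case 2
    then obtain a c where "efclass G a \<union> efclass G c = UNIV" "efclass G a \<noteq> efclass G c"
      by (rule card_range_eq_2E[rotated]) simp_all
    then show ?thesis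
      using two_EF_components_impossible by blast
  next
    case 3
    then show ?thesis
      by (simp add: EF_components_eq)
  qed
qed

end

theorem theorem5:
  fixes G :: "'a::finite \<Rightarrow> 'a \<Rightarrow> relation" and w_f w_e :: real
  assumes "card (UNIV :: 'a set) \<ge> 4"
    and "w_f > 0" and "w_e > 0"
    and "network G"
    and "structural_balance G"
  shows "(\<exists>g. mechanism g \<and> valid g \<and> efficient g \<and> DSIC G w_f w_e g) \<longleftrightarrow>
         (card (F_components G) = 1 \<or> card (EF_components G) \<ge> 3)"
proof -
  interpret balanced_network G
    using assms(4,5) by unfold_locales
  show ?thesis
  proof
    assume "\<exists>g. mechanism g \<and> valid g \<and> efficient g \<and> DSIC G w_f w_e g"
    then obtain g where "mechanism g" "valid g" "efficient g" "DSIC G w_f w_e g"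
      by blast
    then interpret efficient_DSIC_mechanism G w_f w_e g
      using assms(2,3) by unfold_locales
    show "card (F_components G) = 1 \<or> card (EF_components G) \<ge> 3"
      by (rule one_F_component_or_three_EF_components)
  next
    assume "card (F_components G) = 1 \<or> card (EF_components G) \<ge> 3"
    then show "\<exists>g. mechanism g \<and> valid g \<and> efficient g \<and> DSIC G w_f w_e g"
      using mechanism_exists_if_all_friends[OF assms(1)] mechanism_exists_if_three_EF_components
        card_F_components_eq_1_iff
      by blast
  qed
qed

end
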